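(* Let $R$ be a relation with $n$ tuples over attributes $F_1\cup F_2$, where $J=F_1\cap F_2$ is a categorical join key with domain of size $d\ge 2$ such that each value of $J$ appears exactly $n/d$ times in $R$, and the numerical feature values of the tuples of $R$ are independent random vectors with a common distribution, not correlated with $J$. Let $R_{\Join}=\pi_{F_1}(R)\Join_J\pi_{F_2}(R)$ (projections keep duplicates, so each projection has $n$ tuples), and let $s'=\gamma(R_{\Join})$, i.e. $s'[c]=|R_{\Join}|$ and $s'[p]=\sum_{t\in R_{\Join}}p(t)$ for every monomial $p$. Define, for features $f_1\in F_1\setminus J$, $f_2\in F_2\setminus J$, $$\hat s[f_1f_2]=\frac{1-n}{1-d}\frac{s'[f_1f_2]}{s'[c]}+\frac{n-d}{1-d}\frac{s'[f_1]}{s'[c]}\frac{s'[f_2]}{s'[c]},$$ and $\hat s[p]=s'[p]/s'[c]$ for every other monomial $p$ of order $1$ or $2$ in the features of $(F_1\cup F_2)\setminus J$. Then for every monomial $p$ of order $1$ or $2$ in these features, $\mathbb E[\hat s[p]]=\mathbb E[p]$, where $\mathbb E[p]$ is the expected value of $p$ under the common distribution of the tuples' feature values; i.e. $\hat s$ is an unbiased estimator of the (normalized) monomial statistics of $\pi_{F_1\cup F_2}(R)$.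
   Context: Monomials of order 1 are single features $f$; monomials of order 2 are products $f_1f_2$ of two (possibly equal) features. The join $\Join_J$ is the natural (bag) join on $J$, producing for each value of $J$ the Cartesian product of matching tuples. *)

theory Defs
  imports "HOL-Probability.Probability" "HOL-Library.Multiset"
begin

text \<open>Tuples of R are indexed by i < n; key i is the value of the join key J.
  Numerical features of tuple i are the random vector X i (a function on features).
  A = F1 - J, B = F2 - J (disjoint).\<close>

text \<open>Index pairs of the bag join of pi_F1(R) and pi_F2(R) on J.\<close>
definition join_idx :: "nat \<Rightarrow> (nat \<Rightarrow> 'k) \<Rightarrow> (nat \<times> nat) set" where
  "join_idx n key = {(i, j). i < n \<and> j < n \<and> key i = key j}"

definition join_tuple :: "'f set \<Rightarrow> (nat \<Rightarrow> 'a \<Rightarrow> 'f \<Rightarrow> real) \<Rightarrow> nat \<times> nat \<Rightarrow> 'a \<Rightarrow> 'f \<Rightarrow> real" where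
  "join_tuple A X ij \<omega> f = (if f \<in> A then X (fst ij) \<omega> f else X (snd ij) \<omega> f)"

definition mono_eval :: "'f multiset \<Rightarrow> ('f \<Rightarrow> real) \<Rightarrow> real" where
  "mono_eval p t = prod_mset (image_mset t p)"

definition gamma_c :: "nat \<Rightarrow> (nat \<Rightarrow> 'k) \<Rightarrow> real" where
  "gamma_c n key = real (card (join_idx n key))"

definition gamma_mono :: "'f set \<Rightarrow> (nat \<Rightarrow> 'a \<Rightarrow> 'f \<Rightarrow> real) \<Rightarrow> nat \<Rightarrow> (nat \<Rightarrow> 'k)
    \<Rightarrow> 'f multiset \<Rightarrow> 'a \<Rightarrow> real" where
  "gamma_mono A X n key p \<omega> = (\<Sum>ij\<in>join_idx n key. mono_eval p (join_tuple A X ij \<omega>))"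

definition shat :: "'f set \<Rightarrow> 'f set \<Rightarrow> (nat \<Rightarrow> 'a \<Rightarrow> 'f \<Rightarrow> real) \<Rightarrow> nat \<Rightarrow> nat
    \<Rightarrow> (nat \<Rightarrow> 'k) \<Rightarrow> 'f multiset \<Rightarrow> 'a \<Rightarrow> real" where
  "shat A B X n d key p \<omega> =
    (let c = gamma_c n key; s = (\<lambda>q. gamma_mono A X n key q \<omega>) in
     if (\<exists>f1\<in>A. \<exists>f2\<in>B. p = {#f1, f2#}) then
       (let f1 = (THE f. f \<in> A \<and> f \<in># p); f2 = (THE f. f \<in> B \<and> f \<in># p) in
        (1 - real n) / (1 - real d) * (s p / c)
        + (real n - real d) / (1 - real d) * (s {#f1#} / c) * (s {#f2#} / c))
     else s p / c)"

end

theory Submission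
  imports Defs
begin

text \<open>When every key value occurs exactly m = n/d times, the join pairs each tuple with the m
  tuples of its key class, so s'[c] = n m, and for a monomial whose features all lie on one side
  of the join s'[p] = m \<Sigma>i p(X i): the normalised statistic is a sample mean.
  For a cross monomial f1 f2 the join consists of the n diagonal pairs (i, i), each contributing
  u = E[f1 f2], and n m - n pairs of distinct, hence independent, tuples, each contributing
  v = E[f1] E[f2]. Thus s'[f1 f2]/s'[c] has mean (u + (m - 1) v)/m, while s'[f1] s'[f2]/s'[c]^2,
  a product of two sample means, has mean (u + (n - 1) v)/n; the coefficients of the estimator
  are the combination of the two that eliminates v.\<close>

lemma sum_if_diagonal:
  fixes u v :: real
  assumes "finite S" and "{ij \<in> S. fst ij = snd ij} = (\<lambda>i. (i, i)) ` {..<n}"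
  shows "(\<Sum>ij\<in>S. if fst ij = snd ij then u else v) = real n * u + (real (card S) - real n) * v"
proof -
  let ?Diag = "{ij \<in> S. fst ij = snd ij}"
  have card_Diag: "card ?Diag = n"
    unfolding assms(2) by (subst card_image) (auto intro: inj_onI)
  then have "n \<le> card S"
    using card_mono[OF assms(1), of ?Diag] by auto
  then have card_off_Diag: "real (card (S - ?Diag)) = real (card S) - real n"
    using assms(1) card_Diag by (subst card_Diff_subset) auto
  have "S \<inter> {ij. fst ij = snd ij} = ?Diag" and "S \<inter> - {ij. fst ij = snd ij} = S - ?Diag"
    by auto
  then have "(\<Sum>ij\<in>S. if fst ij = snd ij then u else v) = card ?Diag * u + card (S - ?Diag) * v"
    using assms(1) by (simp add: sum.If_cases)
  then show ?thesis using card_Diag card_off_Diag by simp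
qed

lemma join_idx_eq_Sigma:
  "join_idx n key = (SIGMA i:{..<n}. {j. j < n \<and> key j = key i})"
  unfolding join_idx_def by auto

lemma join_idx_subset: "join_idx n key \<subseteq> {..<n} \<times> {..<n}"
  unfolding join_idx_def by auto

lemma join_idx_diagonal: "{ij \<in> join_idx n key. fst ij = snd ij} = (\<lambda>i. (i, i)) ` {..<n}"
  unfolding join_idx_def by auto

lemma sum_join_idx_fst:
  fixes h :: "nat \<Rightarrow> real"
  assumes "\<And>i. i < n \<Longrightarrow> card {j. j < n \<and> key j = key i} = m"
  shows "(\<Sum>ij\<in>join_idx n key. h (fst ij)) = real m * (\<Sum>i<n. h i)"
proof -
  have "(\<Sum>ij\<in>join_idx n key. h (fst ij)) = (\<Sum>i<n. \<Sum>j | j < n \<and> key j = key i. h i)"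
    unfolding join_idx_eq_Sigma by (subst sum.Sigma) (auto simp: split_def)
  also have "\<dots> = (\<Sum>i<n. real m * h i)"
    using assms by (intro sum.cong) auto
  finally show ?thesis by (simp add: sum_distrib_left)
qed

lemma sum_join_idx_snd:
  fixes h :: "nat \<Rightarrow> real"
  assumes "\<And>i. i < n \<Longrightarrow> card {j. j < n \<and> key j = key i} = m"
  shows "(\<Sum>ij\<in>join_idx n key. h (snd ij)) = real m * (\<Sum>i<n. h i)"
proof -
  have "(\<Sum>ij\<in>join_idx n key. h (snd ij)) = (\<Sum>ij\<in>prod.swap ` join_idx n key. h (snd ij))"
    unfolding join_idx_def by (rule sum.cong) auto
  also have "\<dots> = (\<Sum>ij\<in>join_idx n key. h (fst ij))"
    by (subst sum.reindex) (auto simp: inj_on_def)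
  finally show ?thesis using sum_join_idx_fst[OF assms] by simp
qed

lemma gamma_c_eq:
  assumes "\<And>i. i < n \<Longrightarrow> card {j. j < n \<and> key j = key i} = m"
  shows "gamma_c n key = real n * real m"
  using sum_join_idx_fst[OF assms, of "\<lambda>_. 1"] by (simp add: gamma_c_def)

lemma class_size_pos:
  fixes n :: nat
  assumes "\<And>i. i < n \<Longrightarrow> card {j. j < n \<and> key j = key i} = m" and "0 < n"
  shows "0 < m"
proof -
  have "finite {j. j < n \<and> key j = key 0}" by simp
  moreover have "0 \<in> {j. j < n \<and> key j = key 0}" using assms(2) by simp
  ultimately have "card {j. j < n \<and> key j = key 0} \<noteq> 0" by (auto simp: card_eq_0_iff)
  then show ?thesis using assms by simp
qed

lemma mono_eval_singleton: "mono_eval {#f#} = (\<lambda>x. x f)"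
  by (simp add: mono_eval_def fun_eq_iff)

lemma mono_eval_pair: "mono_eval {#f, g#} = (\<lambda>x. x f * x g)"
  by (simp add: mono_eval_def fun_eq_iff mult.commute)

lemma mono_eval_join_tuple_fst:
  "set_mset p \<subseteq> A \<Longrightarrow> mono_eval p (join_tuple A X ij \<omega>) = mono_eval p (X (fst ij) \<omega>)"
  unfolding mono_eval_def join_tuple_def by (auto intro!: arg_cong[where f = prod_mset] image_mset_cong)

lemma mono_eval_join_tuple_snd:
  "set_mset p \<inter> A = {} \<Longrightarrow> mono_eval p (join_tuple A X ij \<omega>) = mono_eval p (X (snd ij) \<omega>)"
  unfolding mono_eval_def join_tuple_def by (auto intro!: arg_cong[where f = prod_mset] image_mset_cong)

lemma gamma_mono_one_sided:
  assumes "\<And>i. i < n \<Longrightarrow> card {j. j < n \<and> key j = key i} = m"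
    and "set_mset p \<subseteq> A \<or> set_mset p \<inter> A = {}"
  shows "gamma_mono A X n key p \<omega> = real m * (\<Sum>i<n. mono_eval p (X i \<omega>))"
  using assms(2)
proof
  assume "set_mset p \<subseteq> A"
  then show ?thesis unfolding gamma_mono_def
    by (simp add: mono_eval_join_tuple_fst
        sum_join_idx_fst[OF assms(1), of "\<lambda>i. mono_eval p (X i \<omega>)"])
next
  assume "set_mset p \<inter> A = {}"
  then show ?thesis unfolding gamma_mono_def
    by (simp add: mono_eval_join_tuple_snd
        sum_join_idx_snd[OF assms(1), of "\<lambda>i. mono_eval p (X i \<omega>)"])
qed

lemma gamma_mono_cross:
  assumes "a \<in> A" and "b \<notin> A"
  shows "gamma_mono A X n key {#a, b#} \<omega>
    = (\<Sum>ij\<in>join_idx n key. X (fst ij) \<omega> a * X (snd ij) \<omega> b)"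
  using assms unfolding gamma_mono_def mono_eval_def join_tuple_def by (simp add: mult.commute)

lemma one_sided_if_not_cross:
  assumes "set_mset p \<subseteq> A \<union> B" and "size p \<le> 2" and "\<not> (\<exists>a\<in>A. \<exists>b\<in>B. p = {#a, b#})"
  shows "set_mset p \<subseteq> A \<or> set_mset p \<inter> A = {}"
proof (rule ccontr)
  assume "\<not> ?thesis"
  then obtain a b where "a \<in># p" "a \<in> A" "b \<in># p" "b \<notin> A" by blast
  then have "b \<in> B" and "a \<noteq> b" using assms(1) by auto
  then have "{#a, b#} \<subseteq># p"
    using \<open>a \<in># p\<close> \<open>b \<in># p\<close> by (simp add: insert_subset_eq_iff in_diff_count)
  then obtain r where "p = {#a, b#} + r" by (auto simp: subset_mset.le_iff_add)
  with assms(2) have "p = {#a, b#}" by simp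
  then show False using assms(3) \<open>a \<in> A\<close> \<open>b \<in> B\<close> by blast
qed

lemma shat_eq_normalized:
  "\<not> (\<exists>a\<in>A. \<exists>b\<in>B. p = {#a, b#})
    \<Longrightarrow> shat A B X n d key p \<omega> = gamma_mono A X n key p \<omega> / gamma_c n key"
  unfolding shat_def Let_def by simp

lemma shat_cross_eq:
  assumes classes: "\<And>i. i < n \<Longrightarrow> card {j. j < n \<and> key j = key i} = m" and "0 < n"
    and "a \<in> A" "b \<in> B" "A \<inter> B = {}"
  shows "shat A B X n d key {#a, b#} \<omega>
    = (1 - real n) / (1 - real d)
        * ((\<Sum>ij\<in>join_idx n key. X (fst ij) \<omega> a * X (snd ij) \<omega> b) / (real n * real m))
      + (real n - real d) / (1 - real d)
        * ((\<Sum>ij\<in>{..<n} \<times> {..<n}. X (fst ij) \<omega> a * X (snd ij) \<omega> b) / (real n * real n))"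
proof -
  have "0 < m" using class_size_pos[OF classes \<open>0 < n\<close>] .
  have cross: "\<exists>a'\<in>A. \<exists>b'\<in>B. {#a, b#} = {#a', b'#}"
    using assms(3,4) by blast
  have "(THE f. f \<in> A \<and> f \<in># {#a, b#}) = a" and "(THE f. f \<in> B \<and> f \<in># {#a, b#}) = b"
    using assms(3-5) by (auto intro!: the_equality)
  then have "shat A B X n d key {#a, b#} \<omega>
      = (1 - real n) / (1 - real d) * (gamma_mono A X n key {#a, b#} \<omega> / gamma_c n key)
        + (real n - real d) / (1 - real d)
          * (gamma_mono A X n key {#a#} \<omega> / gamma_c n key)
          * (gamma_mono A X n key {#b#} \<omega> / gamma_c n key)"
    unfolding shat_def Let_def by (simp only: if_P[OF cross])
  moreover have "gamma_mono A X n key {#a#} \<omega> = real m * (\<Sum>i<n. X i \<omega> a)"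
    and "gamma_mono A X n key {#b#} \<omega> = real m * (\<Sum>i<n. X i \<omega> b)"
    using assms(3-5) by (auto simp: gamma_mono_one_sided[OF classes] mono_eval_singleton)
  moreover have "gamma_mono A X n key {#a, b#} \<omega>
      = (\<Sum>ij\<in>join_idx n key. X (fst ij) \<omega> a * X (snd ij) \<omega> b)"
    using assms(3-5) by (intro gamma_mono_cross) auto
  moreover have "(\<Sum>i<n. X i \<omega> a) * (\<Sum>j<n. X j \<omega> b)
      = (\<Sum>ij\<in>{..<n} \<times> {..<n}. X (fst ij) \<omega> a * X (snd ij) \<omega> b)"
    by (simp add: sum_product sum.cartesian_product split_def)
  moreover have "real m * x / (real n * real m) * (real m * y / (real n * real m))
      = x * y / (real n * real n)" for x y
    using \<open>0 < m\<close> by (simp add: field_simps)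
  ultimately show ?thesis
    by (simp only: gamma_c_eq[OF classes] mult.assoc)
qed

lemma bias_correction_identity:
  fixes n m d u v :: real
  assumes "n = m * d" and "m \<noteq> 0" and "d \<noteq> 0" and "d \<noteq> 1"
  shows "(1 - n) / (1 - d) * ((n * u + (n * m - n) * v) / (n * m))
    + (n - d) / (1 - d) * ((n * u + (n * n - n) * v) / (n * n)) = u"
proof -
  have "1 - d \<noteq> 0" and "n \<noteq> 0" using assms by auto
  have "(1 - n) / (1 - d) * ((n * u + (n * m - n) * v) / (n * m))
      = (1 - n) * (u + (m - 1) * v) / ((1 - d) * m)"
    using \<open>1 - d \<noteq> 0\<close> \<open>n \<noteq> 0\<close> assms(2) by (simp add: field_simps)
  moreover have "(n - d) / (1 - d) * ((n * u + (n * n - n) * v) / (n * n))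
      = (m - 1) * (u + (n - 1) * v) / ((1 - d) * m)"
    using \<open>1 - d \<noteq> 0\<close> assms(2,3) unfolding assms(1) by (simp add: field_simps)
  moreover have "(1 - n) * (u + (m - 1) * v) + (m - 1) * (u + (n - 1) * v) = u * ((1 - d) * m)"
    unfolding assms(1) by (simp add: algebra_simps)
  ultimately show ?thesis
    using \<open>1 - d \<noteq> 0\<close> assms(2) by (simp add: add_divide_distrib[symmetric])
qed

lemma measurable_mono_eval:
  "set_mset p \<subseteq> I \<Longrightarrow> mono_eval p \<in> borel_measurable (PiM I (\<lambda>_. borel))"
proof (induction p)
  case empty
  then show ?case by (simp add: mono_eval_def)
next
  case (add f p)
  have "mono_eval (add_mset f p) = (\<lambda>x. x f * mono_eval p x)"
    by (simp add: mono_eval_def fun_eq_iff)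
  then show ?case using add by (auto intro!: borel_measurable_times measurable_component_singleton)
qed

locale iid_features = prob_space M for M :: "'a measure" +
  fixes X :: "nat \<Rightarrow> 'a \<Rightarrow> 'f \<Rightarrow> real" and n :: nat and I :: "'f set"
    and D :: "('f \<Rightarrow> real) measure"
  assumes measurable_X: "i < n \<Longrightarrow> X i \<in> M \<rightarrow>\<^sub>M PiM I (\<lambda>_. borel)"
    and indep_X: "indep_vars (\<lambda>_. PiM I (\<lambda>_. borel)) X {..<n}"
    and distr_X: "i < n \<Longrightarrow> distr M (PiM I (\<lambda>_. borel)) (X i) = D"
    and integrable_second_moments: "f \<in> I \<Longrightarrow> g \<in> I \<Longrightarrow> integrable D (\<lambda>x. x f * x g)"
begin

lemma integrable_comp_X:
  fixes h :: "('f \<Rightarrow> real) \<Rightarrow> real"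
  assumes "i < n" and "integrable D h"
  shows "integrable M (\<lambda>\<omega>. h (X i \<omega>))"
  using integrable_distr[OF measurable_X[OF assms(1)], of h] assms(2) distr_X[OF assms(1)] by simp

lemma expectation_comp_X:
  fixes h :: "('f \<Rightarrow> real) \<Rightarrow> real"
  assumes "i < n" and "h \<in> borel_measurable (PiM I (\<lambda>_. borel))"
  shows "expectation (\<lambda>\<omega>. h (X i \<omega>)) = (\<integral>x. h x \<partial>D)"
  using integral_distr[OF measurable_X[OF assms(1)] assms(2)] by (simp add: distr_X[OF assms(1)])

lemma integrable_component:
  assumes "0 < n" and "f \<in> I"
  shows "integrable D (\<lambda>x. x f)"
proof -
  interpret D: prob_space D
    using prob_space_distr[OF measurable_X[OF assms(1)]] by (simp add: distr_X[OF assms(1)])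
  have "(\<lambda>x. x f) \<in> borel_measurable D"
    unfolding distr_X[OF assms(1), symmetric] measurable_distr_eq1
    using assms(2) by (rule measurable_component_singleton)
  moreover have "integrable D (\<lambda>x. (x f)\<^sup>2)"
    using integrable_second_moments[OF assms(2) assms(2)] by (simp add: power2_eq_square)
  ultimately show ?thesis by (rule D.square_integrable_imp_integrable)
qed

lemma integrable_mono_eval:
  assumes "0 < n" and "set_mset p \<subseteq> I" and "size p = 1 \<or> size p = 2"
  shows "integrable D (mono_eval p)"
  using assms(3)
proof
  assume "size p = 1"
  then obtain f where "p = {#f#}" using size_1_singleton_mset by blast
  then show ?thesis
    using integrable_component[OF assms(1)] assms(2) by (simp add: mono_eval_singleton)
next
  assume "size p = 2"
  then have "size p = Suc 1" by simp
  then obtain f q where "p = {#f#} + q" and "size q = 1" by (rule size_mset_SucE)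
  then obtain g where "p = {#f, g#}" using size_1_singleton_mset by auto
  then show ?thesis
    using integrable_second_moments assms(2) by (simp add: mono_eval_pair)
qed

lemma indep_components:
  assumes "i < n" "j < n" "i \<noteq> j" "f \<in> I" "g \<in> I"
  shows "indep_var borel (\<lambda>\<omega>. X i \<omega> f) borel (\<lambda>\<omega>. X j \<omega> g)"
proof -
  have component: "(\<lambda>r. r k h) \<in> borel_measurable (PiM {k} (\<lambda>_. PiM I (\<lambda>_. borel)))"
    if "h \<in> I" for k :: nat and h
  proof -
    have "(\<lambda>r. r k) \<in> PiM {k} (\<lambda>_. PiM I (\<lambda>_. borel)) \<rightarrow>\<^sub>M PiM I (\<lambda>_. borel)"
      by (rule measurable_component_singleton) simp
    moreover have "(\<lambda>x. x h) \<in> borel_measurable (PiM I (\<lambda>_. borel))"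
      using that by (rule measurable_component_singleton)
    ultimately show ?thesis by (rule measurable_compose)
  qed
  have "indep_var (PiM {i} (\<lambda>_. PiM I (\<lambda>_. borel))) (\<lambda>\<omega>. restrict (\<lambda>k. X k \<omega>) {i})
      (PiM {j} (\<lambda>_. PiM I (\<lambda>_. borel))) (\<lambda>\<omega>. restrict (\<lambda>k. X k \<omega>) {j})"
    using assms by (intro indep_var_restrict[OF indep_X]) auto
  then have "indep_var borel ((\<lambda>r. r i f) \<circ> (\<lambda>\<omega>. restrict (\<lambda>k. X k \<omega>) {i}))
      borel ((\<lambda>r. r j g) \<circ> (\<lambda>\<omega>. restrict (\<lambda>k. X k \<omega>) {j}))"
    by (rule indep_var_compose[OF _ component[OF assms(4)] component[OF assms(5)]])
  then show ?thesis by (simp add: comp_def)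
qed

lemma integrable_product_components:
  assumes "i < n" "j < n" "f \<in> I" "g \<in> I"
  shows "integrable M (\<lambda>\<omega>. X i \<omega> f * X j \<omega> g)"
proof (cases "i = j")
  case True
  then show ?thesis
    using integrable_comp_X[OF assms(1) integrable_second_moments[OF assms(3,4)]] by simp
next
  case False
  have "0 < n" using assms(1) by simp
  with assms show ?thesis
    by (intro indep_var_integrable indep_components False integrable_comp_X integrable_component)
qed

lemma expectation_product_components:
  assumes "i < n" "j < n" "f \<in> I" "g \<in> I"
  shows "expectation (\<lambda>\<omega>. X i \<omega> f * X j \<omega> g)
    = (if i = j then (\<integral>x. x f * x g \<partial>D) else (\<integral>x. x f \<partial>D) * (\<integral>x. x g \<partial>D))"
proof (cases "i = j")
  case True
  have "(\<lambda>x :: 'f \<Rightarrow> real. x f * x g) \<in> borel_measurable (PiM I (\<lambda>_. borel))"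
    by (rule measurable_mono_eval[of "{#f, g#}", unfolded mono_eval_pair]) (use assms(3,4) in auto)
  then show ?thesis using True expectation_comp_X[OF assms(1)] by simp
next
  case False
  have "0 < n" using assms(1) by simp
  have "expectation (\<lambda>\<omega>. X i \<omega> f * X j \<omega> g)
      = expectation (\<lambda>\<omega>. X i \<omega> f) * expectation (\<lambda>\<omega>. X j \<omega> g)"
    using assms \<open>0 < n\<close>
    by (intro indep_var_lebesgue_integral indep_components False integrable_comp_X integrable_component)
  also have "\<dots> = (\<integral>x. x f \<partial>D) * (\<integral>x. x g \<partial>D)"
    using expectation_comp_X[OF assms(1) measurable_component_singleton[OF assms(3)]]
      expectation_comp_X[OF assms(2) measurable_component_singleton[OF assms(4)]] by simp
  finally show ?thesis using False by simp
qed

lemma expectation_sum_pairs: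
  assumes "S \<subseteq> {..<n} \<times> {..<n}" and "{ij \<in> S. fst ij = snd ij} = (\<lambda>i. (i, i)) ` {..<n}"
    and "f \<in> I" "g \<in> I"
  shows "expectation (\<lambda>\<omega>. \<Sum>ij\<in>S. X (fst ij) \<omega> f * X (snd ij) \<omega> g)
    = real n * (\<integral>x. x f * x g \<partial>D)
      + (real (card S) - real n) * ((\<integral>x. x f \<partial>D) * (\<integral>x. x g \<partial>D))"
proof -
  have "finite S" using assms(1) finite_subset by blast
  have "expectation (\<lambda>\<omega>. \<Sum>ij\<in>S. X (fst ij) \<omega> f * X (snd ij) \<omega> g)
      = (\<Sum>ij\<in>S. expectation (\<lambda>\<omega>. X (fst ij) \<omega> f * X (snd ij) \<omega> g))"
    by (rule Bochner_Integration.integral_sum, rule integrable_product_components) (use assms in auto)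
  also have "\<dots> = (\<Sum>ij\<in>S. if fst ij = snd ij then (\<integral>x. x f * x g \<partial>D)
      else (\<integral>x. x f \<partial>D) * (\<integral>x. x g \<partial>D))"
    by (rule sum.cong[OF refl], rule expectation_product_components) (use assms in auto)
  finally show ?thesis using sum_if_diagonal[OF \<open>finite S\<close> assms(2)] by simp
qed

lemma integrable_sum_pairs:
  assumes "S \<subseteq> {..<n} \<times> {..<n}" and "f \<in> I" "g \<in> I"
  shows "integrable M (\<lambda>\<omega>. \<Sum>ij\<in>S. X (fst ij) \<omega> f * X (snd ij) \<omega> g)"
  by (rule Bochner_Integration.integrable_sum, rule integrable_product_components) (use assms in auto)

lemma expectation_normalized_gamma_one_sided:
  assumes classes: "\<And>i. i < n \<Longrightarrow> card {j. j < n \<and> key j = key i} = m" and "0 < n"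
    and "set_mset p \<subseteq> I" and "set_mset p \<subseteq> A \<or> set_mset p \<inter> A = {}"
    and "integrable D (mono_eval p)"
  shows "expectation (\<lambda>\<omega>. gamma_mono A X n key p \<omega> / gamma_c n key)
    = (\<integral>x. mono_eval p x \<partial>D)"
proof -
  have "0 < m" using class_size_pos[OF classes \<open>0 < n\<close>] .
  then have "(\<lambda>\<omega>. gamma_mono A X n key p \<omega> / gamma_c n key)
      = (\<lambda>\<omega>. (\<Sum>i<n. mono_eval p (X i \<omega>)) / real n)"
    by (simp add: gamma_mono_one_sided[OF classes assms(4)] gamma_c_eq[OF classes])
  moreover have "expectation (\<lambda>\<omega>. \<Sum>i<n. mono_eval p (X i \<omega>))
      = real n * (\<integral>x. mono_eval p x \<partial>D)"
    using assms(3,5) by (simp add: Bochner_Integration.integral_sum integrable_comp_X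
        expectation_comp_X measurable_mono_eval)
  ultimately show ?thesis using \<open>0 < n\<close> by simp
qed

lemma expectation_shat_cross:
  assumes classes: "\<And>i. i < n \<Longrightarrow> card {j. j < n \<and> key j = key i} = m" and "0 < n"
    and "real n = real m * real d" and "d \<noteq> 1"
    and "a \<in> A" "b \<in> B" "A \<inter> B = {}" "a \<in> I" "b \<in> I"
  shows "expectation (shat A B X n d key {#a, b#}) = (\<integral>x. x a * x b \<partial>D)"
proof -
  define T1 where "T1 \<omega> = (\<Sum>ij\<in>join_idx n key. X (fst ij) \<omega> a * X (snd ij) \<omega> b)" for \<omega>
  define T2 where "T2 \<omega> = (\<Sum>ij\<in>{..<n} \<times> {..<n}. X (fst ij) \<omega> a * X (snd ij) \<omega> b)" for \<omega>
  define u where "u = (\<integral>x. x a * x b \<partial>D)"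
  define v where "v = (\<integral>x. x a \<partial>D) * (\<integral>x. x b \<partial>D)"
  have "0 < m" using class_size_pos[OF classes \<open>0 < n\<close>] .
  have "d \<noteq> 0" using assms(3) \<open>0 < n\<close> by (cases d) auto
  have "integrable M T1" and "integrable M T2"
    unfolding T1_def[abs_def] T2_def[abs_def]
    by (rule integrable_sum_pairs[OF join_idx_subset assms(8,9)],
        rule integrable_sum_pairs[OF order_refl assms(8,9)])
  have "real (card (join_idx n key)) = real n * real m"
    using gamma_c_eq[OF classes] by (simp add: gamma_c_def)
  then have E1: "expectation T1 = real n * u + (real n * real m - real n) * v"
    using expectation_sum_pairs[OF join_idx_subset[of n key] join_idx_diagonal[of n key] assms(8,9)]
    unfolding T1_def[abs_def] u_def v_def by simp
  have "{ij \<in> {..<n} \<times> {..<n}. fst ij = snd ij} = (\<lambda>i. (i, i)) ` {..<n}" by auto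
  then have E2: "expectation T2 = real n * u + (real n * real n - real n) * v"
    using expectation_sum_pairs[OF order_refl _ assms(8,9)]
    unfolding T2_def[abs_def] u_def v_def by (simp add: card_cartesian_product)
  have "shat A B X n d key {#a, b#}
      = (\<lambda>\<omega>. (1 - real n) / (1 - real d) * (T1 \<omega> / (real n * real m))
          + (real n - real d) / (1 - real d) * (T2 \<omega> / (real n * real n)))"
    unfolding T1_def T2_def by (rule ext, rule shat_cross_eq[OF classes \<open>0 < n\<close> assms(5-7)])
  then have "expectation (shat A B X n d key {#a, b#})
      = (1 - real n) / (1 - real d) * (expectation T1 / (real n * real m))
        + (real n - real d) / (1 - real d) * (expectation T2 / (real n * real n))"
    using \<open>integrable M T1\<close> \<open>integrable M T2\<close> by (simp add: Bochner_Integration.integral_add)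
  also have "\<dots> = u"
    unfolding E1 E2 using assms(3,4) \<open>0 < m\<close> \<open>d \<noteq> 0\<close> by (intro bias_correction_identity) auto
  finally show ?thesis unfolding u_def .
qed

end

theorem proposition2:
  fixes M :: "'a measure" and X :: "nat \<Rightarrow> 'a \<Rightarrow> 'f \<Rightarrow> real"
    and key :: "nat \<Rightarrow> 'k" and K :: "'k set" and A B :: "'f set"
    and D :: "('f \<Rightarrow> real) measure" and n d :: nat and p :: "'f multiset"
  assumes "prob_space M"
    and "finite A" and "finite B" and "A \<inter> B = {}"
    and "finite K" and "card K = d" and "d \<ge> 2" and "n > 0" and "d dvd n"
    and "\<forall>i<n. key i \<in> K"
    and "\<forall>k\<in>K. card {i. i < n \<and> key i = k} = n div d"
    and "\<forall>i<n. X i \<in> measurable M (PiM (A \<union> B) (\<lambda>_. borel))"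
    and "prob_space.indep_vars M (\<lambda>_. PiM (A \<union> B) (\<lambda>_. borel)) X {..<n}"
    and "\<forall>i<n. distr M (PiM (A \<union> B) (\<lambda>_. borel)) (X i) = D"
    and "\<forall>f\<in>A \<union> B. \<forall>g\<in>A \<union> B. integrable D (\<lambda>x. x f * x g)"
    and "set_mset p \<subseteq> A \<union> B" and "size p = 1 \<or> size p = 2"
  shows "prob_space.expectation M (shat A B X n d key p) = (\<integral>x. mono_eval p x \<partial>D)"
proof -
  interpret iid_features M X n "A \<union> B" D
    using assms(12-15) by (intro iid_features.intro iid_features_axioms.intro assms(1)) blast+
  define m where "m = n div d"
  have classes: "\<And>i. i < n \<Longrightarrow> card {j. j < n \<and> key j = key i} = m"
    using assms(10,11) unfolding m_def by blast
  have "real n = real m * real d"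
    using \<open>d dvd n\<close> unfolding m_def by (simp add: of_nat_mult[symmetric])
  have "d \<noteq> 1" using \<open>d \<ge> 2\<close> by simp
  show ?thesis
  proof (cases "\<exists>a\<in>A. \<exists>b\<in>B. p = {#a, b#}")
    case True
    then obtain a b where "a \<in> A" "b \<in> B" and p: "p = {#a, b#}" by blast
    then show ?thesis
      using expectation_shat_cross[OF classes \<open>0 < n\<close> \<open>real n = real m * real d\<close> \<open>d \<noteq> 1\<close>
          \<open>a \<in> A\<close> \<open>b \<in> B\<close> \<open>A \<inter> B = {}\<close>]
      by (simp add: mono_eval_pair)
  next
    case False
    then have "shat A B X n d key p = (\<lambda>\<omega>. gamma_mono A X n key p \<omega> / gamma_c n key)"
      by (simp add: shat_eq_normalized fun_eq_iff)
    moreover have "set_mset p \<subseteq> A \<or> set_mset p \<inter> A = {}"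
      using one_sided_if_not_cross[OF assms(16) _ False] assms(17) by auto
    ultimately show ?thesis
      using expectation_normalized_gamma_one_sided[OF classes \<open>0 < n\<close> assms(16)]
        integrable_mono_eval[OF \<open>0 < n\<close> assms(16,17)]
      by simp
  qed
qed

end
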